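(* Let $k$ be a field of characteristic zero, $n\ge1$, $S=k[x_1,\ldots,x_n]$, and $(S,L)$ a triangularizable Lie–Rinehart algebra with basis $\alpha_1,\ldots,\alpha_n$ and enveloping algebra $U$. If $p>0$ and $u\in F_pU$ satisfy $d^0(u)\equiv0\pmod{F_{p-2}\mathcal{X}^1}$, then $u\in F_{p-1}U$.
   Context: Triangularizable: $L\subseteq\operatorname{Der}(S)$ is an $S$-submodule and Lie subalgebra which is a free $S$-module with basis of derivations $\alpha_1,\ldots,\alpha_n$ such that $\alpha_i(x_j)=0$ for $i>j$ and $\alpha_1(x_1)\cdots\alpha_n(x_n)\ne0$. $U$ is the universal enveloping algebra of the Lie–Rinehart algebra $(S,L)$, in which $[\alpha,s]=\alpha(s)$ for $\alpha\in L$, $s\in S$. For $I=(i_n,\ldots,i_1)\in\mathbb{N}^n$, $\alpha^I=\alpha_n^{i_n}\cdots\alpha_1^{i_1}$ and $|I|=\sum i_m$; these form a left $S$-basis of $U$, and $F_pU$ is the $S$-span of $\alpha^I$ with $|I|\le p$ ($F_pU=0$ for $p<0$). With $W=\operatorname{span}_k(x_1,\ldots,x_n)$ and dual basis $\hat x_1,\ldots,\hat x_n$, $\mathcal{X}^1=U\otimes_k W^*$, with elements $\sum_k u_k\hat x_k$; $d^0:U\to\mathcal{X}^1$ is $d^0(u)=\sum_{k=1}^n[u,x_k]\hat x_k$; and $F_p\mathcal{X}^1$ is the $k$-span of $f\alpha^I\hat x_k$ with $f\in S$, $|I|\le p$. *)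

theory Defs
  imports "HOL-Library.Poly_Mapping"
begin

text \<open>The polynomial ring S = k[x_i : i in 'n], for a finite linearly ordered
index type 'n (standing for {1..n}); monomials are exponent vectors.\<close>
type_synonym ('n, 'k) pol = "('n \<Rightarrow>\<^sub>0 nat) \<Rightarrow>\<^sub>0 'k"

definition pconst :: "'k::zero \<Rightarrow> ('n, 'k) pol" where
  "pconst c = Poly_Mapping.single 0 c"

definition pvar :: "'n \<Rightarrow> ('n, 'k::{zero,one}) pol" where
  "pvar i = Poly_Mapping.single (Poly_Mapping.single i 1) 1"

definition is_derivation :: "(('n, 'k::field) pol \<Rightarrow> ('n, 'k) pol) \<Rightarrow> bool" where
  "is_derivation D \<longleftrightarrow>
     (\<forall>f g. D (f + g) = D f + D g) \<and>
     (\<forall>c f. D (pconst c * f) = pconst c * D f) \<and>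
     (\<forall>f g. D (f * g) = f * D g + g * D f)"

definition Sspan :: "('n::finite \<Rightarrow> ('n, 'k::field) pol \<Rightarrow> ('n, 'k) pol)
                     \<Rightarrow> (('n, 'k) pol \<Rightarrow> ('n, 'k) pol) set" where
  "Sspan \<alpha> = {D. \<exists>c. D = (\<lambda>f. \<Sum>i\<in>UNIV. c i * \<alpha> i f)}"

definition lie_bracket :: "('a \<Rightarrow> 'a::ab_group_add) \<Rightarrow> ('a \<Rightarrow> 'a) \<Rightarrow> ('a \<Rightarrow> 'a)" where
  "lie_bracket D E = (\<lambda>f. D (E f) - E (D f))"

definition triangularizable :: "('n::{finite,linorder} \<Rightarrow> ('n, 'k::field) pol \<Rightarrow> ('n, 'k) pol) \<Rightarrow> bool" where
  "triangularizable \<alpha> \<longleftrightarrow>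
     (\<forall>i. is_derivation (\<alpha> i)) \<and>
     (\<forall>c. (\<lambda>f. \<Sum>i\<in>UNIV. c i * \<alpha> i f) = (\<lambda>f. 0) \<longrightarrow> (\<forall>i. c i = 0)) \<and>
     (\<forall>D\<in>Sspan \<alpha>. \<forall>E\<in>Sspan \<alpha>. lie_bracket D E \<in> Sspan \<alpha>) \<and>
     (\<forall>i j. j < i \<longrightarrow> \<alpha> i (pvar j) = 0) \<and>
     (\<Prod>i\<in>UNIV. \<alpha> i (pvar i)) \<noteq> 0"

text \<open>Multi-indices I : 'n => nat; alpha^I = alpha_n^{i_n} ... alpha_1^{i_1}
(descending order of indices), |I| = sum of entries.\<close>
definition mono_U :: "('n::{finite,linorder} \<Rightarrow> 'u::monoid_mult) \<Rightarrow> ('n \<Rightarrow> nat) \<Rightarrow> 'u" where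
  "mono_U a I = prod_list (map (\<lambda>i. a i ^ I i) (rev (sorted_list_of_set (UNIV :: 'n set))))"

definition mdeg :: "('n::finite \<Rightarrow> nat) \<Rightarrow> nat" where
  "mdeg I = (\<Sum>i\<in>UNIV. I i)"

definition PBW_comb :: "(('n, 'k) pol \<Rightarrow> 'u::ring_1) \<Rightarrow> ('n::{finite,linorder} \<Rightarrow> 'u)
                        \<Rightarrow> (('n \<Rightarrow> nat) \<Rightarrow> ('n, 'k::zero) pol) \<Rightarrow> 'u" where
  "PBW_comb \<iota> a f = (\<Sum>I\<in>{I. f I \<noteq> 0}. \<iota> (f I) * mono_U a I)"

text \<open>U (type 'u) with iS : S -> U and iL : L -> U is the universal enveloping
algebra of the Lie-Rinehart algebra (S,L): the structure maps satisfy the defining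
relations and the ordered monomials alpha^I form a left S-basis (PBW). These
properties determine U up to isomorphism.\<close>
definition is_enveloping :: "('n::{finite,linorder} \<Rightarrow> ('n, 'k::field) pol \<Rightarrow> ('n, 'k) pol)
     \<Rightarrow> (('n, 'k) pol \<Rightarrow> 'u::ring_1) \<Rightarrow> ((('n, 'k) pol \<Rightarrow> ('n, 'k) pol) \<Rightarrow> 'u) \<Rightarrow> bool" where
  "is_enveloping \<alpha> iS iL \<longleftrightarrow>
     iS 1 = 1 \<and> (\<forall>f g. iS (f + g) = iS f + iS g) \<and> (\<forall>f g. iS (f * g) = iS f * iS g) \<and>
     (\<forall>D\<in>Sspan \<alpha>. \<forall>E\<in>Sspan \<alpha>. iL (\<lambda>f. D f + E f) = iL D + iL E) \<and>
     (\<forall>s. \<forall>D\<in>Sspan \<alpha>. iL (\<lambda>f. s * D f) = iS s * iL D) \<and>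
     (\<forall>D\<in>Sspan \<alpha>. \<forall>E\<in>Sspan \<alpha>. iL (lie_bracket D E) = iL D * iL E - iL E * iL D) \<and>
     (\<forall>D\<in>Sspan \<alpha>. \<forall>s. iL D * iS s - iS s * iL D = iS (D s)) \<and>
     (\<forall>u. \<exists>f. finite {I. f I \<noteq> 0} \<and> u = PBW_comb iS (\<lambda>i. iL (\<alpha> i)) f) \<and>
     (\<forall>f. finite {I. f I \<noteq> 0} \<and> PBW_comb iS (\<lambda>i. iL (\<alpha> i)) f = 0 \<longrightarrow> (\<forall>I. f I = 0))"

text \<open>F_p U (p an integer; empty combination gives 0 for p < 0).\<close>
definition filtU :: "(('n, 'k::zero) pol \<Rightarrow> 'u::ring_1) \<Rightarrow> ('n::{finite,linorder} \<Rightarrow> 'u) \<Rightarrow> int \<Rightarrow> 'u set" where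
  "filtU iS a p = {PBW_comb iS a f | f :: ('n \<Rightarrow> nat) \<Rightarrow> ('n, 'k) pol.
      finite {I. f I \<noteq> 0} \<and> (\<forall>I. f I \<noteq> 0 \<longrightarrow> int (mdeg I) \<le> p)}"

text \<open>X^1 = U \<otimes>_k W^*: elements sum_k u_k xhat_k, represented as 'n => 'u.
d^0(u) = sum_k [u, x_k] xhat_k; F_p X^1 = tuples with all u_k in F_p U.\<close>
definition d0 :: "(('n, 'k::{zero,one}) pol \<Rightarrow> 'u::ring_1) \<Rightarrow> 'u \<Rightarrow> ('n \<Rightarrow> 'u)" where
  "d0 iS u = (\<lambda>k. u * iS (pvar k) - iS (pvar k) * u)"

definition filtX1 :: "(('n, 'k::zero) pol \<Rightarrow> 'u::ring_1) \<Rightarrow> ('n::{finite,linorder} \<Rightarrow> 'u) \<Rightarrow> int \<Rightarrow> ('n \<Rightarrow> 'u) set" where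
  "filtX1 iS a p = {v. \<forall>k. v k \<in> filtU iS a p}"

end

theory Submission
  imports Defs
begin

text \<open>The ordered monomials \<open>\<alpha>\<^sup>I\<close> form an S-basis of U, so \<open>F\<^sub>p U\<close> is spanned by those
  with \<open>|I| \<le> p\<close>. Two commutation rules govern this filtration: \<open>\<alpha>\<^sub>a \<alpha>\<^sup>I \<equiv> \<alpha>\<^bsup>I + e\<^sub>a\<^esup>\<close>
  modulo \<open>F\<^bsub>|I|\<^esub> U\<close>, because \<open>[\<alpha>\<^sub>b, \<alpha>\<^sub>a]\<close> lies in \<open>L = S\<alpha>\<^sub>1 + ... + S\<alpha>\<^sub>n\<close>; and
  \<open>[\<alpha>\<^sup>I, x] \<equiv> \<Sum>\<^sub>m I\<^sub>m \<alpha>\<^sub>m(x) \<alpha>\<^bsup>I - e\<^sub>m\<^esup>\<close> modulo \<open>F\<^bsub>|I| - 2\<^esub> U\<close>.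
  Hence for \<open>u = \<Sum> f\<^sub>I \<alpha>\<^sup>I\<close> in \<open>F\<^sub>p U\<close> the coefficient of \<open>\<alpha>\<^sup>J\<close>, \<open>|J| = p - 1\<close>, in
  \<open>[u, x\<^sub>k]\<close> is \<open>\<Sum>\<^sub>m (J\<^sub>m + 1) f\<^bsub>J + e\<^sub>m\<^esub> \<alpha>\<^sub>m(x\<^sub>k)\<close> modulo \<open>F\<^bsub>p - 2\<^esub> U\<close>, and by PBW
  uniqueness these coefficients vanish when \<open>d\<^sup>0 u \<in> F\<^bsub>p - 2\<^esub> \<X>\<^sup>1\<close>. Since \<open>\<alpha>\<^sub>m(x\<^sub>k) = 0\<close> for \<open>m > k\<close> and
  \<open>\<alpha>\<^sub>k(x\<^sub>k) \<noteq> 0\<close>, the triangular system forces \<open>(J\<^sub>m + 1) f\<^bsub>J + e\<^sub>m\<^esub> = 0\<close>, so in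
  characteristic zero all coefficients of degree p vanish.\<close>

section \<open>Multi-indices and ordered monomials\<close>

definition idx_le :: "int \<Rightarrow> ('n::finite \<Rightarrow> nat) set" where
  "idx_le q = {I. int (mdeg I) \<le> q}"

definition idx_eq :: "nat \<Rightarrow> ('n::finite \<Rightarrow> nat) set" where
  "idx_eq n = {I. mdeg I = n}"

definition inc :: "('n \<Rightarrow> nat) \<Rightarrow> 'n \<Rightarrow> 'n \<Rightarrow> nat" where
  "inc I a = I(a := Suc (I a))"

lemma le_mdeg: "I i \<le> mdeg I"
  unfolding mdeg_def by (rule member_le_sum) auto

lemma finite_idx_le: "finite (idx_le q :: ('n::finite \<Rightarrow> nat) set)"
proof -
  let ?B = "{I. \<forall>i. (i \<in> (UNIV :: 'n set) \<longrightarrow> I i \<in> {..nat q}) \<and> (i \<notin> UNIV \<longrightarrow> I i = 0)}"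
  have "idx_le q \<subseteq> ?B"
  proof
    fix I :: "'n \<Rightarrow> nat" assume "I \<in> idx_le q"
    then have "I i \<le> nat q" for i
      using le_mdeg[of I i] by (simp add: idx_le_def le_nat_iff)
    then show "I \<in> ?B" by simp
  qed
  moreover have "finite ?B" by (rule finite_set_of_finite_funs) auto
  ultimately show ?thesis by (rule finite_subset)
qed

lemma finite_idx_eq: "finite (idx_eq n)"
  by (rule finite_subset[OF _ finite_idx_le[of "int n"]]) (auto simp: idx_eq_def idx_le_def)

lemma idx_eq_subset_idx_le: "idx_eq n \<subseteq> idx_le (int n)"
  by (auto simp: idx_eq_def idx_le_def)

lemma mdeg_fun_upd: "mdeg (I(m := v)) + I m = mdeg I + v"
proof -
  have "(\<Sum>i\<in>UNIV - {m}. (I(m := v)) i) = (\<Sum>i\<in>UNIV - {m}. I i)"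
    by (rule sum.cong) auto
  then show ?thesis
    unfolding mdeg_def by (simp add: sum.remove[of UNIV m])
qed

lemma mdeg_inc: "mdeg (inc I a) = Suc (mdeg I)"
  using mdeg_fun_upd[of I a "Suc (I a)"] by (simp add: inc_def)

lemma mdeg_eq_0_iff: "mdeg I = 0 \<longleftrightarrow> I = (\<lambda>_. 0)"
  by (auto simp: mdeg_def fun_eq_iff)

lemma mdeg_dec: "I m \<noteq> 0 \<Longrightarrow> Suc (mdeg (I(m := I m - 1))) = mdeg I"
  using mdeg_fun_upd[of I m "I m - 1"] by simp

lemma inc_dec: "I m \<noteq> 0 \<Longrightarrow> inc (I(m := I m - 1)) m = I"
  by (auto simp: inc_def fun_eq_iff)

lemma inj_on_inc: "inj_on (\<lambda>J. inc J m) A"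
proof (rule inj_onI)
  fix J K assume "inc J m = inc K m"
  then have "(inc J m)(m := J m) = (inc K m)(m := K m)"
    by (metis Suc_inject inc_def fun_upd_same)
  then show "J = K" by (simp add: inc_def)
qed

lemma inc_image_idx_eq: "(\<lambda>J. inc J m) ` idx_eq n = {I \<in> idx_eq (Suc n). 0 < I m}"
proof
  show "(\<lambda>J. inc J m) ` idx_eq n \<subseteq> {I \<in> idx_eq (Suc n). 0 < I m}"
    by (auto simp: idx_eq_def mdeg_inc) (simp add: inc_def)
  show "{I \<in> idx_eq (Suc n). 0 < I m} \<subseteq> (\<lambda>J. inc J m) ` idx_eq n"
  proof
    fix I :: "'a \<Rightarrow> nat" assume I: "I \<in> {I \<in> idx_eq (Suc n). 0 < I m}"
    then have "I(m := I m - 1) \<in> idx_eq n"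
      using mdeg_dec[of I m] by (simp add: idx_eq_def)
    moreover have "I = inc (I(m := I m - 1)) m"
      using I inc_dec[of I m] by simp
    ultimately show "I \<in> (\<lambda>J. inc J m) ` idx_eq n" by blast
  qed
qed

lemma sum_idx_eq_Suc:
  assumes "\<And>I m. I m = 0 \<Longrightarrow> G I m = 0"
  shows "(\<Sum>I\<in>idx_eq (Suc n). \<Sum>m\<in>UNIV. G I m) = (\<Sum>J\<in>idx_eq n. \<Sum>m\<in>UNIV. G (inc J m) m)"
proof -
  have reindex: "(\<Sum>I\<in>idx_eq (Suc n). G I m) = (\<Sum>J\<in>idx_eq n. G (inc J m) m)" for m
  proof -
    have "(\<Sum>I\<in>idx_eq (Suc n). G I m) = (\<Sum>I\<in>{I \<in> idx_eq (Suc n). 0 < I m}. G I m)"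
      by (rule sum.mono_neutral_right) (auto simp: finite_idx_eq assms)
    also have "\<dots> = (\<Sum>J\<in>idx_eq n. G (inc J m) m)"
      unfolding inc_image_idx_eq[symmetric] by (rule sum.reindex[OF inj_on_inc, unfolded comp_def])
    finally show ?thesis .
  qed
  have "(\<Sum>I\<in>idx_eq (Suc n). \<Sum>m\<in>UNIV. G I m) = (\<Sum>m\<in>UNIV. \<Sum>I\<in>idx_eq (Suc n). G I m)"
    by (rule sum.swap)
  also have "\<dots> = (\<Sum>m\<in>UNIV. \<Sum>J\<in>idx_eq n. G (inc J m) m)"
    using reindex by simp
  also have "\<dots> = (\<Sum>J\<in>idx_eq n. \<Sum>m\<in>UNIV. G (inc J m) m)"
    by (rule sum.swap)
  finally show ?thesis .
qed

lemma idx_eq_Suc_obtain_inc: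
  assumes "I \<in> idx_eq (Suc n)"
  obtains J m where "J \<in> idx_eq n" and "I = inc J m"
proof -
  from assms have "I \<noteq> (\<lambda>_. 0)" by (auto simp: idx_eq_def mdeg_def)
  then obtain m where "0 < I m" by (auto simp: fun_eq_iff)
  with assms have "I \<in> (\<lambda>J. inc J m) ` idx_eq n" by (simp add: inc_image_idx_eq)
  then show ?thesis using that by blast
qed

lemma obtain_top_index:
  fixes I :: "'n::{finite,linorder} \<Rightarrow> nat"
  assumes "I \<noteq> (\<lambda>_. 0)"
  obtains J b where "I = inc J b" and "\<forall>j>b. J j = 0"
proof -
  define b where "b = Max {j. I j \<noteq> 0}"
  have "{j. I j \<noteq> 0} \<noteq> {}" using assms by (auto simp: fun_eq_iff)
  then have "I b \<noteq> 0" unfolding b_def using Max_in[of "{j. I j \<noteq> 0}"] by simp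
  moreover have "\<forall>j>b. I j = 0"
  proof (intro allI impI)
    fix j assume "b < j"
    show "I j = 0"
    proof (rule ccontr)
      assume "I j \<noteq> 0"
      then have "j \<le> b" unfolding b_def by (simp add: Max_ge)
      with \<open>b < j\<close> show False by simp
    qed
  qed
  ultimately show ?thesis
    using that[of "I(b := I b - 1)" b] inc_dec[of I b] by auto
qed

lemma obtain_top_index_above:
  fixes I :: "'n::{finite,linorder} \<Rightarrow> nat"
  assumes "a < j" and "I j \<noteq> 0"
  obtains J b where "I = inc J b" and "\<forall>j>b. J j = 0" and "a < b"
proof -
  from assms(2) have "I \<noteq> (\<lambda>_. 0)" by auto
  then obtain J b where I: "I = inc J b" and top: "\<forall>j>b. J j = 0" by (rule obtain_top_index)
  have "\<not> b < j"
    using assms(2) top unfolding I by (auto simp: inc_def split: if_splits)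
  with assms(1) have "a < b" by simp
  with I top show ?thesis by (rule that)
qed

lemma mono_U_0:
  fixes g :: "'n::{finite,linorder} \<Rightarrow> 'u::monoid_mult"
  shows "mono_U g (\<lambda>_. 0) = 1"
proof -
  have "prod_list (map (\<lambda>i. g i ^ 0) xs) = 1" for xs :: "'n list"
    by (induct xs) simp_all
  then show ?thesis unfolding mono_U_def .
qed

lemma prod_list_inc:
  fixes g :: "'n::linorder \<Rightarrow> 'u::monoid_mult"
  assumes "sorted_wrt (>) xs" "a \<in> set xs" "\<forall>j>a. I j = 0"
  shows "prod_list (map (\<lambda>i. g i ^ inc I a i) xs) = g a * prod_list (map (\<lambda>i. g i ^ I i) xs)"
  using assms
proof (induction xs)
  case Nil then show ?case by simp
next
  case (Cons y ys)
  show ?case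
  proof (cases "y = a")
    case True
    with Cons.prems have "a \<notin> set ys" by auto
    then have ys: "map (\<lambda>i. g i ^ inc I a i) ys = map (\<lambda>i. g i ^ I i) ys"
      by (auto simp: inc_def)
    have "g a ^ inc I a a = g a * g a ^ I a" by (simp add: inc_def)
    with True show ?thesis by (simp add: ys mult.assoc)
  next
    case False
    with Cons.prems have "a \<in> set ys" "y > a" by auto
    with Cons.prems False have "I y = 0" "inc I a y = 0" by (auto simp: inc_def)
    with Cons.IH Cons.prems \<open>a \<in> set ys\<close> show ?thesis by simp
  qed
qed

lemma mono_U_inc:
  fixes g :: "'n::{finite,linorder} \<Rightarrow> 'u::monoid_mult"
  assumes "\<forall>j>a. I j = 0"
  shows "mono_U g (inc I a) = g a * mono_U g I"
  unfolding mono_U_def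
  by (rule prod_list_inc) (use assms in \<open>simp_all add: sorted_wrt_rev\<close>)

lemma mono_U_inc_dec:
  fixes g :: "'n::{finite,linorder} \<Rightarrow> 'u::monoid_mult"
  assumes "\<forall>j>b. J j = 0" and "J m \<noteq> 0"
  shows "mono_U g ((inc J b)(m := inc J b m - 1)) = g b * mono_U g (J(m := J m - 1))"
proof -
  have "(inc J b)(m := inc J b m - 1) = inc (J(m := J m - 1)) b"
    using assms(2) by (auto simp: inc_def fun_eq_iff)
  moreover have "\<forall>j>b. (J(m := J m - 1)) j = 0" using assms(1) by auto
  ultimately show ?thesis by (simp add: mono_U_inc)
qed

lemma triangular_kernel_trivial:
  fixes A :: "'n::{finite,linorder} \<Rightarrow> 'n \<Rightarrow> 'r::ring_no_zero_divisors"
  assumes upper: "\<And>m k. k < m \<Longrightarrow> A m k = 0"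
    and diag: "\<And>k. A k k \<noteq> 0"
    and kernel: "\<And>k. (\<Sum>m\<in>UNIV. v m * A m k) = 0"
  shows "v m = 0"
proof (rule ccontr)
  assume "v m \<noteq> 0"
  define k where "k = Min {m. v m \<noteq> 0}"
  have "v k \<noteq> 0"
    unfolding k_def using \<open>v m \<noteq> 0\<close> Min_in[of "{m. v m \<noteq> 0}"] by auto
  have below: "v j = 0" if "j < k" for j
  proof (rule ccontr)
    assume "v j \<noteq> 0"
    then have "k \<le> j" unfolding k_def by (simp add: Min_le)
    with that show False by simp
  qed
  have "(\<Sum>j\<in>UNIV. v j * A j k) = (\<Sum>j\<in>UNIV. if j = k then v k * A k k else 0)"
    by (rule sum.cong) (use below upper in \<open>auto simp: neq_iff\<close>)
  with kernel[of k] have "v k * A k k = 0" by simp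
  with \<open>v k \<noteq> 0\<close> diag show False by simp
qed

lemma triangularizable_kernel:
  assumes "triangularizable \<alpha>" and "\<And>k. (\<Sum>m\<in>UNIV. v m * \<alpha> m (pvar k)) = 0"
  shows "v m = 0"
proof (rule triangular_kernel_trivial[where A = "\<lambda>m k. \<alpha> m (pvar k)"])
  show "\<alpha> m (pvar k) = 0" if "k < m" for m k
    using assms(1) that by (simp add: triangularizable_def)
  show "\<alpha> k (pvar k) \<noteq> 0" for k
    using assms(1) by (auto simp: triangularizable_def)
qed (rule assms(2))

section \<open>The PBW filtration of the enveloping algebra\<close>

locale lie_rinehart_envelope =
  fixes \<alpha> :: "'n::{finite,linorder} \<Rightarrow> ('n, 'k::field) pol \<Rightarrow> ('n, 'k) pol"
    and iS :: "('n, 'k) pol \<Rightarrow> 'u::ring_1"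
    and iL :: "(('n, 'k) pol \<Rightarrow> ('n, 'k) pol) \<Rightarrow> 'u"
  assumes derivation: "is_derivation (\<alpha> i)"
    and Sspan_lie_closed: "D \<in> Sspan \<alpha> \<Longrightarrow> E \<in> Sspan \<alpha> \<Longrightarrow> lie_bracket D E \<in> Sspan \<alpha>"
    and enveloping: "is_enveloping \<alpha> iS iL"
begin

abbreviation pbw :: "('n \<Rightarrow> nat) \<Rightarrow> 'u" where
  "pbw I \<equiv> mono_U (\<lambda>i. iL (\<alpha> i)) I"

abbreviation F :: "int \<Rightarrow> 'u set" where
  "F \<equiv> filtU iS (\<lambda>i. iL (\<alpha> i))"

abbreviation ad :: "('n, 'k) pol \<Rightarrow> 'u \<Rightarrow> 'u" where
  "ad x v \<equiv> v * iS x - iS x * v"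

lemma iS_add: "iS (f + g) = iS f + iS g"
  using enveloping by (simp add: is_enveloping_def)

lemma iS_mult: "iS (f * g) = iS f * iS g"
  using enveloping by (simp add: is_enveloping_def)

lemma iS_1: "iS 1 = 1"
  using enveloping by (simp add: is_enveloping_def)

lemma iS_0: "iS 0 = 0"
  using iS_add[of 0 0] by simp

lemma iS_minus: "iS (- f) = - iS f"
  using iS_add[of f "- f"] iS_0 by (simp add: add_eq_0_iff2)

lemma iS_sum: "iS (sum h A) = (\<Sum>x\<in>A. iS (h x))"
  by (induct A rule: infinite_finite_induct) (simp_all add: iS_0 iS_add)

lemma iS_commute: "iS f * iS g = iS g * iS f"
  by (metis iS_mult mult.commute)

lemma iL_add: "D \<in> Sspan \<alpha> \<Longrightarrow> E \<in> Sspan \<alpha> \<Longrightarrow> iL (\<lambda>f. D f + E f) = iL D + iL E"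
  using enveloping unfolding is_enveloping_def by blast

lemma iL_scale: "D \<in> Sspan \<alpha> \<Longrightarrow> iL (\<lambda>f. s * D f) = iS s * iL D"
  using enveloping unfolding is_enveloping_def by blast

lemma iL_lie_bracket: "D \<in> Sspan \<alpha> \<Longrightarrow> E \<in> Sspan \<alpha> \<Longrightarrow> iL (lie_bracket D E) = iL D * iL E - iL E * iL D"
  using enveloping unfolding is_enveloping_def by blast

lemma derivation_0: "\<alpha> i 0 = 0"
  using derivation[of i] unfolding is_derivation_def by (metis add_cancel_right_right)

lemma Sspan_sum: "(\<lambda>f. \<Sum>i\<in>A. c i * \<alpha> i f) \<in> Sspan \<alpha>"
proof -
  have eq: "(\<lambda>f. \<Sum>i\<in>A. c i * \<alpha> i f) = (\<lambda>f. \<Sum>i\<in>UNIV. (if i \<in> A then c i else 0) * \<alpha> i f)"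
  proof
    fix f
    have "(\<Sum>i\<in>A. c i * \<alpha> i f) = (\<Sum>i\<in>UNIV. if i \<in> A then c i * \<alpha> i f else 0)"
      by (simp add: sum.inter_restrict[symmetric])
    also have "\<dots> = (\<Sum>i\<in>UNIV. (if i \<in> A then c i else 0) * \<alpha> i f)"
      by (rule sum.cong) auto
    finally show "(\<Sum>i\<in>A. c i * \<alpha> i f) = (\<Sum>i\<in>UNIV. (if i \<in> A then c i else 0) * \<alpha> i f)" .
  qed
  show ?thesis
    unfolding Sspan_def mem_Collect_eq by (rule exI[of _ "\<lambda>i. if i \<in> A then c i else 0"]) (rule eq)
qed

lemma alpha_in_Sspan: "\<alpha> i \<in> Sspan \<alpha>"
  using Sspan_sum[where A = "{i}" and c = "\<lambda>_. 1"] by simp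

lemma iL_zero: "iL (\<lambda>f. 0) = 0"
proof -
  have "(\<lambda>f. 0) \<in> Sspan \<alpha>"
    using Sspan_sum[where A = "{}"] by simp
  from iL_add[OF this this] show ?thesis by simp
qed

lemma iL_Sspan_sum: "iL (\<lambda>f. \<Sum>i\<in>A. c i * \<alpha> i f) = (\<Sum>i\<in>A. iS (c i) * iL (\<alpha> i))"
proof (induct A rule: infinite_finite_induct)
  case (infinite A)
  then show ?case by (simp add: iL_zero)
next
  case empty
  then show ?case by (simp add: iL_zero)
next
  case (insert x A)
  have "iL (\<lambda>f. \<Sum>i\<in>insert x A. c i * \<alpha> i f)
      = iL (\<lambda>f. c x * \<alpha> x f) + iL (\<lambda>f. \<Sum>i\<in>A. c i * \<alpha> i f)"
    using insert iL_add[OF Sspan_sum[where A = "{x}" and c = c] Sspan_sum[where A = A and c = c]]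
    by simp
  also have "iL (\<lambda>f. c x * \<alpha> x f) = iS (c x) * iL (\<alpha> x)"
    by (rule iL_scale[OF alpha_in_Sspan])
  finally show ?case using insert by simp
qed

lemma commutator_alpha:
  obtains c where "iL (\<alpha> b) * iL (\<alpha> a) - iL (\<alpha> a) * iL (\<alpha> b) = (\<Sum>i\<in>UNIV. iS (c i) * iL (\<alpha> i))"
proof -
  obtain c where c: "lie_bracket (\<alpha> b) (\<alpha> a) = (\<lambda>f. \<Sum>i\<in>UNIV. c i * \<alpha> i f)"
    using Sspan_lie_closed[OF alpha_in_Sspan alpha_in_Sspan] unfolding Sspan_def by blast
  have "iL (\<alpha> b) * iL (\<alpha> a) - iL (\<alpha> a) * iL (\<alpha> b) = iL (lie_bracket (\<alpha> b) (\<alpha> a))"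
    by (simp add: iL_lie_bracket alpha_in_Sspan)
  also have "\<dots> = (\<Sum>i\<in>UNIV. iS (c i) * iL (\<alpha> i))"
    unfolding c by (rule iL_Sspan_sum)
  finally show ?thesis by (rule that)
qed

lemma alpha_mult_iS: "iL (\<alpha> a) * iS s = iS s * iL (\<alpha> a) + iS (\<alpha> a s)"
proof -
  have "iL (\<alpha> a) * iS s - iS s * iL (\<alpha> a) = iS (\<alpha> a s)"
    using enveloping alpha_in_Sspan unfolding is_enveloping_def by blast
  then show ?thesis by (simp add: diff_eq_eq add.commute)
qed

lemma filtU_eq: "F q = range (\<lambda>c. \<Sum>I\<in>idx_le q. iS (c I) * pbw I)"
proof (intro equalityI subsetI)
  fix x assume "x \<in> F q"
  then obtain c where deg: "\<forall>I. c I \<noteq> 0 \<longrightarrow> int (mdeg I) \<le> q" and x: "x = PBW_comb iS (\<lambda>i. iL (\<alpha> i)) c"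
    unfolding filtU_def by blast
  have "x = (\<Sum>I\<in>idx_le q. iS (c I) * pbw I)"
    unfolding x PBW_comb_def
    by (rule sum.mono_neutral_left) (use deg finite_idx_le in \<open>auto simp: iS_0 idx_le_def\<close>)
  then show "x \<in> range (\<lambda>c. \<Sum>I\<in>idx_le q. iS (c I) * pbw I)" by blast
next
  fix x assume "x \<in> range (\<lambda>c. \<Sum>I\<in>idx_le q. iS (c I) * pbw I)"
  then obtain c where x: "x = (\<Sum>I\<in>idx_le q. iS (c I) * pbw I)" by blast
  define c' where "c' I = (if I \<in> idx_le q then c I else 0)" for I
  have supp: "{I. c' I \<noteq> 0} \<subseteq> idx_le q" by (auto simp: c'_def)
  have "PBW_comb iS (\<lambda>i. iL (\<alpha> i)) c' = (\<Sum>I\<in>idx_le q. iS (c' I) * pbw I)"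
    unfolding PBW_comb_def by (rule sum.mono_neutral_left) (use supp finite_idx_le in \<open>auto simp: iS_0\<close>)
  also have "\<dots> = x" unfolding x by (rule sum.cong) (auto simp: c'_def)
  finally show "x \<in> F q"
    unfolding filtU_def using supp finite_subset[OF supp finite_idx_le] by (auto simp: idx_le_def)
qed

lemma filtU_I: "x = (\<Sum>I\<in>idx_le q. iS (c I) * pbw I) \<Longrightarrow> x \<in> F q"
  unfolding filtU_eq by blast

lemma filtU_E:
  assumes "x \<in> F q"
  obtains c where "x = (\<Sum>I\<in>idx_le q. iS (c I) * pbw I)"
  using assms unfolding filtU_eq by blast

lemma zero_in_filtU: "0 \<in> F q"
  by (rule filtU_I[where c = "\<lambda>_. 0"]) (simp add: iS_0)

lemma filtU_add: "x \<in> F q \<Longrightarrow> y \<in> F q \<Longrightarrow> x + y \<in> F q"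
proof -
  assume "x \<in> F q" "y \<in> F q"
  obtain c where x: "x = (\<Sum>I\<in>idx_le q. iS (c I) * pbw I)"
    using \<open>x \<in> F q\<close> by (rule filtU_E)
  obtain d where y: "y = (\<Sum>I\<in>idx_le q. iS (d I) * pbw I)"
    using \<open>y \<in> F q\<close> by (rule filtU_E)
  from x y have "x + y = (\<Sum>I\<in>idx_le q. iS (c I + d I) * pbw I)"
    by (simp add: iS_add distrib_right sum.distrib)
  then show ?thesis by (rule filtU_I)
qed

lemma iS_mult_filtU: "x \<in> F q \<Longrightarrow> iS s * x \<in> F q"
proof -
  assume "x \<in> F q"
  then obtain c where "x = (\<Sum>I\<in>idx_le q. iS (c I) * pbw I)" by (rule filtU_E)
  then have "iS s * x = (\<Sum>I\<in>idx_le q. iS (s * c I) * pbw I)"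
    by (simp add: iS_mult sum_distrib_left mult.assoc)
  then show ?thesis by (rule filtU_I)
qed

lemma filtU_uminus: "x \<in> F q \<Longrightarrow> - x \<in> F q"
  using iS_mult_filtU[of x q "- 1"] by (simp add: iS_minus iS_1)

lemma filtU_diff: "x \<in> F q \<Longrightarrow> y \<in> F q \<Longrightarrow> x - y \<in> F q"
  using filtU_add[of x q "- y"] filtU_uminus by simp

lemma filtU_sum: "(\<And>i. i \<in> A \<Longrightarrow> h i \<in> F q) \<Longrightarrow> sum h A \<in> F q"
  by (induct A rule: infinite_finite_induct) (auto simp: zero_in_filtU filtU_add)

lemma pbw_in_filtU: "int (mdeg I) \<le> q \<Longrightarrow> iS s * pbw I \<in> F q"
proof -
  assume "int (mdeg I) \<le> q"
  then have I: "I \<in> idx_le q" by (simp add: idx_le_def)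
  have "(\<Sum>J\<in>idx_le q. iS (if J = I then s else 0) * pbw J) = (\<Sum>J\<in>idx_le q. if J = I then iS s * pbw I else 0)"
    by (rule sum.cong) (auto simp: iS_0)
  also have "\<dots> = iS s * pbw I" using I by (simp add: finite_idx_le)
  finally show ?thesis by (rule filtU_I[OF sym])
qed

lemma filtU_mono: "q \<le> q' \<Longrightarrow> F q \<subseteq> F q'"
proof
  fix x assume "q \<le> q'" and "x \<in> F q"
  from \<open>x \<in> F q\<close> obtain c where x: "x = (\<Sum>I\<in>idx_le q. iS (c I) * pbw I)" by (rule filtU_E)
  have "idx_le q \<subseteq> idx_le q'" using \<open>q \<le> q'\<close> by (auto simp: idx_le_def)
  then have "x = (\<Sum>I\<in>idx_le q'. iS (if I \<in> idx_le q then c I else 0) * pbw I)"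
    unfolding x by (intro sum.mono_neutral_cong_left) (auto simp: finite_idx_le iS_0)
  then show "x \<in> F q'" by (rule filtU_I)
qed

lemma filtU_negative: "q < 0 \<Longrightarrow> F q = {0}"
  using zero_in_filtU[of q] by (auto simp: filtU_eq idx_le_def)

lemma pbw_independent:
  assumes "finite D" and "(\<Sum>J\<in>D. iS (c J) * pbw J) = 0" and "J \<in> D"
  shows "c J = 0"
proof -
  define c' where "c' J = (if J \<in> D then c J else 0)" for J
  have supp: "{I. c' I \<noteq> 0} \<subseteq> D" by (auto simp: c'_def)
  have "PBW_comb iS (\<lambda>i. iL (\<alpha> i)) c' = (\<Sum>I\<in>D. iS (c' I) * pbw I)"
    unfolding PBW_comb_def by (rule sum.mono_neutral_left) (use supp assms(1) in \<open>auto simp: iS_0\<close>)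
  also have "\<dots> = 0" using assms(2) by (simp add: c'_def)
  finally have "\<forall>I. c' I = 0"
    using enveloping finite_subset[OF supp assms(1)] unfolding is_enveloping_def by blast
  then have "c' J = 0" ..
  with assms(3) show ?thesis by (simp add: c'_def)
qed

lemma alpha_mult_filtU_step:
  assumes reorder: "\<And>a I. mdeg I \<le> m \<Longrightarrow> iL (\<alpha> a) * pbw I - pbw (inc I a) \<in> F (int m)"
    and "x \<in> F (int m)"
  shows "iL (\<alpha> a) * x \<in> F (int m + 1)"
proof -
  obtain c where x: "x = (\<Sum>I\<in>idx_le (int m). iS (c I) * pbw I)"
    using \<open>x \<in> F (int m)\<close> by (rule filtU_E)
  have "iL (\<alpha> a) * (iS (c I) * pbw I) \<in> F (int m + 1)" if "I \<in> idx_le (int m)" for I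
  proof -
    from that have "mdeg I \<le> m" by (simp add: idx_le_def)
    have "iL (\<alpha> a) * (iS (c I) * pbw I) = iS (c I) * (iL (\<alpha> a) * pbw I - pbw (inc I a))
        + iS (c I) * pbw (inc I a) + iS (\<alpha> a (c I)) * pbw I"
      by (simp add: alpha_mult_iS algebra_simps flip: mult.assoc)
    moreover have "iS (c I) * (iL (\<alpha> a) * pbw I - pbw (inc I a)) \<in> F (int m + 1)"
      using iS_mult_filtU[OF reorder[OF \<open>mdeg I \<le> m\<close>]] filtU_mono[of "int m" "int m + 1"] by auto
    moreover have "iS (c I) * pbw (inc I a) \<in> F (int m + 1)"
      using \<open>mdeg I \<le> m\<close> by (intro pbw_in_filtU) (simp add: mdeg_inc)
    moreover have "iS (\<alpha> a (c I)) * pbw I \<in> F (int m + 1)"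
      using \<open>mdeg I \<le> m\<close> by (intro pbw_in_filtU) simp
    ultimately show ?thesis by (simp add: filtU_add)
  qed
  then show ?thesis
    unfolding x sum_distrib_left by (rule filtU_sum)
qed

lemma alpha_mult_pbw_inc_top:
  assumes top: "\<forall>j>b. J j = 0" and "a < b"
  shows "iL (\<alpha> a) * pbw (inc J b) - pbw (inc (inc J b) a)
    = iL (\<alpha> b) * (iL (\<alpha> a) * pbw J - pbw (inc J a))
      - (iL (\<alpha> b) * iL (\<alpha> a) - iL (\<alpha> a) * iL (\<alpha> b)) * pbw J"
proof -
  have "inc (inc J b) a = inc (inc J a) b" using \<open>a < b\<close> by (auto simp: inc_def fun_eq_iff)
  moreover have "\<forall>j>b. inc J a j = 0" using top \<open>a < b\<close> by (auto simp: inc_def)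
  ultimately have "pbw (inc (inc J b) a) = iL (\<alpha> b) * pbw (inc J a)" by (simp add: mono_U_inc)
  then show ?thesis by (simp add: mono_U_inc[OF top] algebra_simps)
qed

text \<open>If no index above \<open>a\<close> occurs in \<open>I\<close>, then \<open>\<alpha>\<^sub>a \<alpha>\<^sup>I\<close> is itself ordered; otherwise
  \<open>\<alpha>\<^sub>a\<close> is commuted past the top factor \<open>\<alpha>\<^sub>b\<close>, and the error \<open>[\<alpha>\<^sub>b, \<alpha>\<^sub>a] \<in> L\<close> is an
  \<open>S\<close>-combination of the \<open>\<alpha>\<^sub>i\<close>, of lower degree.\<close>

lemma alpha_mult_pbw: "mdeg I \<le> n \<Longrightarrow> iL (\<alpha> a) * pbw I - pbw (inc I a) \<in> F (int n)"
proof (induction n arbitrary: a I)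
  case 0
  then have "\<forall>j>a. I j = 0" using mdeg_eq_0_iff[of I] by auto
  then show ?case by (simp add: mono_U_inc zero_in_filtU)
next
  case (Suc m)
  show ?case
  proof (cases "\<forall>j>a. I j = 0")
    case True
    then show ?thesis by (simp add: mono_U_inc zero_in_filtU)
  next
    case False
    then obtain j where "a < j" and "I j \<noteq> 0" by auto
    then obtain J b where I: "I = inc J b" and top: "\<forall>j>b. J j = 0" and "a < b"
      by (rule obtain_top_index_above)
    have "mdeg J \<le> m" using Suc.prems I by (simp add: mdeg_inc)
    obtain c where c: "iL (\<alpha> b) * iL (\<alpha> a) - iL (\<alpha> a) * iL (\<alpha> b) = (\<Sum>i\<in>UNIV. iS (c i) * iL (\<alpha> i))"
      by (rule commutator_alpha)
    define r where "r = iL (\<alpha> a) * pbw J - pbw (inc J a)"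
    have "iL (\<alpha> a) * pbw I - pbw (inc I a) = iL (\<alpha> b) * r - (\<Sum>i\<in>UNIV. iS (c i) * (iL (\<alpha> i) * pbw J))"
      unfolding I alpha_mult_pbw_inc_top[OF top \<open>a < b\<close>] c r_def
      by (simp add: sum_distrib_right mult.assoc)
    also have "\<dots> \<in> F (int m + 1)"
    proof (intro filtU_diff filtU_sum iS_mult_filtU)
      have "r \<in> F (int m)" unfolding r_def using \<open>mdeg J \<le> m\<close> by (rule Suc.IH)
      with Suc.IH show "iL (\<alpha> b) * r \<in> F (int m + 1)" by (rule alpha_mult_filtU_step)
      fix i
      have "pbw J \<in> F (int m)" using pbw_in_filtU[of J "int m" 1] \<open>mdeg J \<le> m\<close> by (simp add: iS_1)
      with Suc.IH show "iL (\<alpha> i) * pbw J \<in> F (int m + 1)" by (rule alpha_mult_filtU_step)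
    qed
    finally show ?thesis by (simp add: add.commute)
  qed
qed

lemma alpha_mult_filtU: "x \<in> F q \<Longrightarrow> iL (\<alpha> a) * x \<in> F (q + 1)"
proof (cases "q < 0")
  case True
  moreover assume "x \<in> F q"
  ultimately show ?thesis by (simp add: filtU_negative zero_in_filtU)
next
  case False
  then obtain m where "q = int m" by (metis nonneg_eq_int not_less)
  moreover assume "x \<in> F q"
  ultimately show ?thesis by (simp add: alpha_mult_filtU_step alpha_mult_pbw)
qed

section \<open>Commutators with the coordinates\<close>

lemma ad_alpha_mult: "ad x (iL (\<alpha> b) * v) = iL (\<alpha> b) * ad x v + iS (\<alpha> b x) * v"
  by (simp add: algebra_simps alpha_mult_iS flip: mult.assoc)

lemma ad_iS_mult: "ad x (iS f * v) = iS f * ad x v"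
  by (simp add: algebra_simps iS_commute flip: mult.assoc)

lemma ad_sum: "ad x (\<Sum>I\<in>A. iS (c I) * pbw I) = (\<Sum>I\<in>A. iS (c I) * ad x (pbw I))"
  by (simp add: sum_distrib_left sum_distrib_right sum_subtractf flip: ad_iS_mult)

text \<open>The leading term \<open>\<Sum>\<^sub>m I\<^sub>m \<alpha>\<^sub>m(x) \<alpha>\<^bsup>I - e\<^sub>m\<^esup>\<close> of \<open>[\<alpha>\<^sup>I, x]\<close>; where \<open>I m = 0\<close>
  the truncated \<open>I m - 1\<close> is harmless, as the coefficient vanishes.\<close>

definition ad_symbol :: "('n, 'k) pol \<Rightarrow> ('n \<Rightarrow> nat) \<Rightarrow> 'u" where
  "ad_symbol x I = (\<Sum>m\<in>UNIV. iS (of_nat (I m) * \<alpha> m x) * pbw (I(m := I m - 1)))"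

lemma ad_symbol_in_filtU: "ad_symbol x I \<in> F (int (mdeg I) - 1)"
  unfolding ad_symbol_def
proof (rule filtU_sum)
  fix m
  show "iS (of_nat (I m) * \<alpha> m x) * pbw (I(m := I m - 1)) \<in> F (int (mdeg I) - 1)"
  proof (cases "I m = 0")
    case True
    then show ?thesis by (simp add: iS_0 zero_in_filtU)
  next
    case False
    then show ?thesis by (intro pbw_in_filtU) (simp flip: mdeg_dec)
  qed
qed

lemma ad_symbol_inc:
  "ad_symbol x (inc J b)
    = (\<Sum>m\<in>UNIV. iS (of_nat (J m) * \<alpha> m x) * pbw ((inc J b)(m := inc J b m - 1)))
      + iS (\<alpha> b x) * pbw J"
proof -
  have "iS (of_nat (inc J b m) * \<alpha> m x) * pbw ((inc J b)(m := inc J b m - 1))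
      = iS (of_nat (J m) * \<alpha> m x) * pbw ((inc J b)(m := inc J b m - 1))
        + (if m = b then iS (\<alpha> b x) * pbw J else 0)" for m
  proof (cases "m = b")
    case True
    then have "(inc J b)(m := inc J b m - 1) = J" and "inc J b m = Suc (J m)" by (auto simp: inc_def)
    with True show ?thesis by (simp add: iS_add distrib_right)
  qed (simp add: inc_def)
  then show ?thesis unfolding ad_symbol_def by (simp add: sum.distrib)
qed

lemma alpha_mult_ad_symbol:
  assumes top: "\<forall>j>b. J j = 0"
  shows "iL (\<alpha> b) * ad_symbol x J + iS (\<alpha> b x) * pbw J - ad_symbol x (inc J b)
    \<in> F (int (mdeg J) - 1)"
proof -
  define t where "t m = of_nat (J m) * \<alpha> m x" for m
  have alpha_mult_term: "iL (\<alpha> b) * (iS (t m) * pbw (J(m := J m - 1)))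
      = iS (t m) * pbw ((inc J b)(m := inc J b m - 1)) + iS (\<alpha> b (t m)) * pbw (J(m := J m - 1))" for m
  proof (cases "J m = 0")
    case True
    then show ?thesis by (simp add: t_def iS_0 derivation_0)
  next
    case False
    have "iL (\<alpha> b) * (iS (t m) * pbw (J(m := J m - 1))) = (iL (\<alpha> b) * iS (t m)) * pbw (J(m := J m - 1))"
      by (simp add: mult.assoc)
    also have "\<dots> = iS (t m) * (iL (\<alpha> b) * pbw (J(m := J m - 1))) + iS (\<alpha> b (t m)) * pbw (J(m := J m - 1))"
      by (simp add: alpha_mult_iS distrib_right mult.assoc)
    finally show ?thesis by (simp only: mono_U_inc_dec[OF top False])
  qed
  have "iL (\<alpha> b) * ad_symbol x J + iS (\<alpha> b x) * pbw J - ad_symbol x (inc J b)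
      = (\<Sum>m\<in>UNIV. iS (\<alpha> b (t m)) * pbw (J(m := J m - 1)))"
    unfolding ad_symbol_inc unfolding ad_symbol_def t_def[symmetric] sum_distrib_left alpha_mult_term
    by (simp add: sum.distrib)
  also have "\<dots> \<in> F (int (mdeg J) - 1)"
  proof (rule filtU_sum)
    fix m
    show "iS (\<alpha> b (t m)) * pbw (J(m := J m - 1)) \<in> F (int (mdeg J) - 1)"
    proof (cases "J m = 0")
      case True
      then show ?thesis by (simp add: t_def derivation_0 iS_0 zero_in_filtU)
    next
      case False
      then show ?thesis by (intro pbw_in_filtU) (simp flip: mdeg_dec)
    qed
  qed
  finally show ?thesis .
qed

lemma ad_pbw: "ad x (pbw I) - ad_symbol x I \<in> F (int (mdeg I) - 2)"
proof (induction "mdeg I" arbitrary: I)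
  case 0
  then have "I = (\<lambda>_. 0)" by (simp add: mdeg_eq_0_iff)
  then show ?case by (simp add: mono_U_0 ad_symbol_def iS_0 zero_in_filtU)
next
  case (Suc n)
  then have "I \<noteq> (\<lambda>_. 0)" by (auto simp: mdeg_def)
  then obtain J b where I: "I = inc J b" and top: "\<forall>j>b. J j = 0" by (rule obtain_top_index)
  have J: "mdeg J = n" using Suc.hyps(2) I by (simp add: mdeg_inc)
  define r where "r = ad x (pbw J) - ad_symbol x J"
  have "ad x (pbw I) - ad_symbol x I
      = iL (\<alpha> b) * r + (iL (\<alpha> b) * ad_symbol x J + iS (\<alpha> b x) * pbw J - ad_symbol x I)"
    unfolding I mono_U_inc[OF top] ad_alpha_mult r_def by (simp add: algebra_simps)
  also have "\<dots> \<in> F (int n - 1)"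
  proof (rule filtU_add)
    have "r \<in> F (int n - 2)" unfolding r_def using Suc.hyps(1)[of J] J by simp
    then show "iL (\<alpha> b) * r \<in> F (int n - 1)" using alpha_mult_filtU by fastforce
    show "iL (\<alpha> b) * ad_symbol x J + iS (\<alpha> b x) * pbw J - ad_symbol x I \<in> F (int n - 1)"
      using alpha_mult_ad_symbol[OF top, of x] I J by simp
  qed
  finally have "ad x (pbw I) - ad_symbol x I \<in> F (int n - 1)" .
  moreover have "int (mdeg I) - 2 = int n - 1" using Suc.hyps(2) by linarith
  ultimately show ?case by simp
qed

lemma sum_ad_symbol_idx_eq:
  "(\<Sum>I\<in>idx_eq (Suc n). iS (c I) * ad_symbol x I)
    = (\<Sum>J\<in>idx_eq n. iS (\<Sum>m\<in>UNIV. c (inc J m) * (of_nat (Suc (J m)) * \<alpha> m x)) * pbw J)"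
proof -
  define G where "G I m = iS (c I * (of_nat (I m) * \<alpha> m x)) * pbw (I(m := I m - 1))" for I m
  have "(\<Sum>I\<in>idx_eq (Suc n). iS (c I) * ad_symbol x I) = (\<Sum>I\<in>idx_eq (Suc n). \<Sum>m\<in>UNIV. G I m)"
    by (simp add: G_def ad_symbol_def sum_distrib_left iS_mult mult.assoc)
  also have "\<dots> = (\<Sum>J\<in>idx_eq n. \<Sum>m\<in>UNIV. G (inc J m) m)"
    by (rule sum_idx_eq_Suc) (simp add: G_def iS_0)
  also have "\<dots> = (\<Sum>J\<in>idx_eq n. iS (\<Sum>m\<in>UNIV. c (inc J m) * (of_nat (Suc (J m)) * \<alpha> m x)) * pbw J)"
    by (simp add: G_def inc_def iS_sum sum_distrib_right)
  finally show ?thesis .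
qed

lemma ad_top_degree:
  assumes u: "u = (\<Sum>I\<in>idx_le (int (Suc n)). iS (c I) * pbw I)"
  shows "ad x u - (\<Sum>J\<in>idx_eq n. iS (\<Sum>m\<in>UNIV. c (inc J m) * (of_nat (Suc (J m)) * \<alpha> m x)) * pbw J)
    \<in> F (int n - 1)"
proof -
  let ?D = "idx_le (int (Suc n))" and ?T = "idx_eq (Suc n)"
  have split: "(\<Sum>I\<in>?D. iS (c I) * ad_symbol x I)
      = (\<Sum>I\<in>?T. iS (c I) * ad_symbol x I) + (\<Sum>I\<in>?D - ?T. iS (c I) * ad_symbol x I)"
    unfolding sum.subset_diff[OF idx_eq_subset_idx_le[of "Suc n"] finite_idx_le] by (rule add.commute)
  have "ad x u - (\<Sum>I\<in>?T. iS (c I) * ad_symbol x I)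
      = (\<Sum>I\<in>?D. iS (c I) * (ad x (pbw I) - ad_symbol x I)) + (\<Sum>I\<in>?D - ?T. iS (c I) * ad_symbol x I)"
    unfolding u ad_sum right_diff_distrib sum_subtractf split by simp
  also have "\<dots> \<in> F (int n - 1)"
  proof (intro filtU_add filtU_sum iS_mult_filtU)
    fix I :: "'n \<Rightarrow> nat" assume "I \<in> ?D"
    then have "int (mdeg I) - 2 \<le> int n - 1" by (simp add: idx_le_def)
    from filtU_mono[OF this] ad_pbw[of I x]
    show "ad x (pbw I) - ad_symbol x I \<in> F (int n - 1)" by (rule subsetD)
  next
    fix I :: "'n \<Rightarrow> nat" assume "I \<in> ?D - ?T"
    then have "int (mdeg I) - 1 \<le> int n - 1" by (auto simp: idx_le_def idx_eq_def)
    from filtU_mono[OF this] ad_symbol_in_filtU[of x I]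
    show "ad_symbol x I \<in> F (int n - 1)" by (rule subsetD)
  qed
  finally show ?thesis by (simp add: sum_ad_symbol_idx_eq)
qed

lemma homogeneous_in_lower_filtU:
  assumes "(\<Sum>J\<in>idx_eq n. iS (c J) * pbw J) \<in> F (int n - 1)" and "J \<in> idx_eq n"
  shows "c J = 0"
proof -
  obtain d where d: "(\<Sum>J\<in>idx_eq n. iS (c J) * pbw J) = (\<Sum>J\<in>idx_le (int n - 1). iS (d J) * pbw J)"
    using assms(1) by (rule filtU_E)
  define e where "e J = (if J \<in> idx_eq n then c J else - d J)" for J
  have disjoint: "idx_eq n \<inter> idx_le (int n - 1) = {}" by (auto simp: idx_eq_def idx_le_def)
  have "(\<Sum>J\<in>idx_eq n \<union> idx_le (int n - 1). iS (e J) * pbw J)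
      = (\<Sum>J\<in>idx_eq n. iS (e J) * pbw J) + (\<Sum>J\<in>idx_le (int n - 1). iS (e J) * pbw J)"
    by (rule sum.union_disjoint) (simp_all add: finite_idx_eq finite_idx_le disjoint)
  also have "(\<Sum>J\<in>idx_eq n. iS (e J) * pbw J) = (\<Sum>J\<in>idx_eq n. iS (c J) * pbw J)"
    by (rule sum.cong) (simp_all add: e_def)
  also have "(\<Sum>J\<in>idx_le (int n - 1). iS (e J) * pbw J) = - (\<Sum>J\<in>idx_le (int n - 1). iS (d J) * pbw J)"
    unfolding sum_negf[symmetric] by (rule sum.cong) (use disjoint in \<open>auto simp: e_def iS_minus\<close>)
  finally have "(\<Sum>J\<in>idx_eq n \<union> idx_le (int n - 1). iS (e J) * pbw J) = 0"
    using d by simp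
  then show ?thesis
    using pbw_independent[of "idx_eq n \<union> idx_le (int n - 1)" e J] assms(2)
    by (simp add: finite_idx_eq finite_idx_le e_def)
qed

lemma ad_lower_imp_symbol_coeffs_eq_0:
  assumes u: "u = (\<Sum>I\<in>idx_le (int (Suc n)). iS (c I) * pbw I)"
    and "ad x u \<in> F (int n - 1)" and "J \<in> idx_eq n"
  shows "(\<Sum>m\<in>UNIV. c (inc J m) * of_nat (Suc (J m)) * \<alpha> m x) = 0"
proof -
  from filtU_diff[OF assms(2) ad_top_degree[OF u, where x = x]]
  have "(\<Sum>J\<in>idx_eq n. iS (\<Sum>m\<in>UNIV. c (inc J m) * (of_nat (Suc (J m)) * \<alpha> m x)) * pbw J)
      \<in> F (int n - 1)"
    by simp
  from homogeneous_in_lower_filtU[OF this assms(3)] show ?thesis by (simp add: mult.assoc)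
qed

lemma top_coefficients_zero_in_filtU:
  assumes "\<And>I. I \<in> idx_eq p \<Longrightarrow> c I = 0"
  shows "(\<Sum>I\<in>idx_le (int p). iS (c I) * pbw I) \<in> F (int p - 1)"
proof (rule filtU_I)
  show "(\<Sum>I\<in>idx_le (int p). iS (c I) * pbw I) = (\<Sum>I\<in>idx_le (int p - 1). iS (c I) * pbw I)"
  proof (rule sum.mono_neutral_right)
    show "idx_le (int p - 1) \<subseteq> idx_le (int p)" by (auto simp: idx_le_def)
    show "\<forall>I\<in>idx_le (int p) - idx_le (int p - 1). iS (c I) * pbw I = 0"
      using assms by (auto simp: idx_le_def idx_eq_def iS_0)
  qed (rule finite_idx_le)
qed

end

theorem proposition3p2:
  fixes \<alpha> :: "'n::{finite,linorder} \<Rightarrow> ('n, 'k::field_char_0) pol \<Rightarrow> ('n, 'k) pol"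
    and iS :: "('n, 'k) pol \<Rightarrow> 'u::ring_1"
    and iL :: "(('n, 'k) pol \<Rightarrow> ('n, 'k) pol) \<Rightarrow> 'u"
    and p :: nat and u :: 'u
  assumes "triangularizable \<alpha>"
    and "is_enveloping \<alpha> iS iL"
    and "p > 0"
    and "u \<in> filtU iS (\<lambda>i. iL (\<alpha> i)) (int p)"
    and "d0 iS u \<in> filtX1 iS (\<lambda>i. iL (\<alpha> i)) (int p - 2)"
  shows "u \<in> filtU iS (\<lambda>i. iL (\<alpha> i)) (int p - 1)"
proof -
  interpret lie_rinehart_envelope \<alpha> iS iL
    using assms(1,2) by unfold_locales (auto simp: triangularizable_def)
  obtain n where p: "p = Suc n" using \<open>p > 0\<close> gr0_implies_Suc by blast
  obtain c where u: "u = (\<Sum>I\<in>idx_le (int p). iS (c I) * pbw I)"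
    using assms(4) by (rule filtU_E)
  have ad_lower: "ad (pvar k) u \<in> F (int n - 1)" for k
    using assms(5) p by (simp add: d0_def filtX1_def)
  have top_inc: "c (inc J m) = 0" if "J \<in> idx_eq n" for J m
  proof -
    from assms(1) ad_lower_imp_symbol_coeffs_eq_0[OF u[unfolded p] ad_lower that]
    have "c (inc J m) * of_nat (Suc (J m)) = 0" by (rule triangularizable_kernel)
    then show ?thesis by (simp del: of_nat_Suc) \<comment> \<open>the only use of characteristic zero\<close>
  qed
  have "c I = 0" if "I \<in> idx_eq p" for I
  proof -
    from that obtain J m where "J \<in> idx_eq n" and "I = inc J m"
      unfolding p by (rule idx_eq_Suc_obtain_inc)
    with top_inc show ?thesis by simp
  qed
  then show ?thesis unfolding u by (rule top_coefficients_zero_in_filtU)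
qed

end
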